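(* Let $n\ge1$, $1\le p<\infty$, and let $K\subset\mathbb R^n$ be an origin-symmetric convex body. For all $f\in L^p(\mathbb R^n)$, $$2|K|\,\|f\|^p_{L^p(\mathbb R^n)}\;\le\;\left[\frac{f(x)-f(y)}{\|x-y\|_K^{\frac np}}\right]^p_{M^p(\mathbb R^n\times\mathbb R^n,\mathcal L^{2n})}\;\le\; 2^{p+1}|K|\,\|f\|^p_{L^p(\mathbb R^n)},$$ where $|K|$ is the volume of $K$. Moreover, setting for $\lambda>0$ $$\widetilde E_{\lambda,K}=\left\{(x,y)\in\mathbb R^n\times\mathbb R^n:\ x\neq y,\ \frac{|f(x)-f(y)|}{\|x-y\|_K^{\frac{n}{p}}}\geq\lambda\right\},$$ one has $$\lim_{\lambda\to0^+}\lambda^p\,\mathcal L^{2n}(\widetilde E_{\lambda,K})=2|K|\,\|f\|^p_{L^p(\mathbb R^n)}.$$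
   Context: A convex body is a compact convex subset of $\mathbb R^n$ with non-empty interior; origin-symmetric means $K=-K$. The Minkowski functional is $\|x\|_K=\inf\{\lambda\ge 0: x\in\lambda K\}$, a norm on $\mathbb R^n$. $\mathcal L^{2n}$ is Lebesgue measure on $\mathbb R^n\times\mathbb R^n$. For a measurable function $g$ on $\mathbb R^n\times\mathbb R^n$ (defined a.e., here off the diagonal $x=y$), the weak $L^p$ (Marcinkiewicz) quasinorm is $[g]^p_{M^p(\mathbb R^n\times\mathbb R^n,\mathcal L^{2n})}=\sup_{\lambda>0}\lambda^p\,\mathcal L^{2n}(\{(x,y): |g(x,y)|\ge\lambda\})$. *)

theory Defs
  imports "HOL-Analysis.Analysis"
begin

definition minkowski_functional :: "'a::real_vector set \<Rightarrow> 'a \<Rightarrow> real" where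
  "minkowski_functional K x = Inf {t::real. t \<ge> 0 \<and> x \<in> (\<lambda>s. t *\<^sub>R s) ` K}"

text \<open>Weak L^p (Marcinkiewicz) quasinorm to the p-th power, w.r.t. a measure M.\<close>
definition weak_Lp_pow :: "'b measure \<Rightarrow> real \<Rightarrow> ('b \<Rightarrow> real) \<Rightarrow> ennreal" where
  "weak_Lp_pow M p g = (SUP t\<in>{0<..}. ennreal (t powr p) * emeasure M {z \<in> space M. \<bar>g z\<bar> \<ge> t})"

end

theory Submission imports Defs begin

text \<open>
  For \<open>r > 0\<close> the sublevel set \<open>{y. \<parallel>x - y\<parallel>\<^sub>K \<le> r}\<close> is the translate \<open>x - r K\<close>, of volume
  \<open>r\<^sup>n |K|\<close>. By Fubini, the pairs with \<open>c \<parallel>x - y\<parallel>\<^sub>K\<^bsup>n/p\<^esup> \<le> |f x|\<close> therefore have measure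
  \<open>c\<^sup>-\<^sup>p |K| \<integral> |f|\<^sup>p\<close>, and likewise with \<open>|f y|\<close>. By the triangle inequality the level set
  \<open>E\<^sub>t = {|f x - f y| \<ge> t \<parallel>x - y\<parallel>\<^sub>K\<^bsup>n/p\<^esup>}\<close> is covered by two such sets with \<open>c = t/2\<close>, which
  gives the upper bound \<open>2\<^bsup>p+1\<^esup> |K| \<integral> |f|\<^sup>p\<close>. For the limit, \<open>E\<^sub>t\<close> is squeezed between the sets
  with \<open>c = (1 \<plusminus> \<delta>) t\<close> up to the set \<open>D\<close> where both \<open>|f x|\<close> and \<open>|f y|\<close> exceed
  \<open>\<delta> t \<parallel>x - y\<parallel>\<^sub>K\<^bsup>n/p\<^esup>\<close>. Splitting \<open>D\<close> according to whether \<open>|f|\<^sup>p < s\<close> gives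
  \<open>t\<^sup>p |D| \<le> 2 \<delta>\<^sup>-\<^sup>p |K| \<integral>\<^bsub>|f|\<^sup>p<s\<^esub> |f|\<^sup>p + t\<^sup>p |{|f|\<^sup>p \<ge> s}|\<^sup>2\<close>, which is small for small \<open>s\<close>
  and then small \<open>t\<close>. The lower bound follows from the limit. Throughout, \<open>f\<close> is replaced by a
  Borel representative, whose level sets differ from those of \<open>f\<close> by a null set of the product.
\<close>

lemma powr_le_iff_le_powr_inverse:
  fixes a b q :: real
  assumes "0 < q" "0 \<le> a" "0 \<le> b"
  shows "a powr q \<le> b \<longleftrightarrow> a \<le> b powr (1 / q)"
proof -
  have "a powr q \<le> b \<longleftrightarrow> a powr q \<le> (b powr (1 / q)) powr q"
    using assms by (simp add: powr_powr)
  also have "\<dots> \<longleftrightarrow> a \<le> b powr (1 / q)"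
  proof
    show "a \<le> b powr (1 / q)" if "a powr q \<le> (b powr (1 / q)) powr q"
      using that powr_less_mono2[of q "b powr (1 / q)" a] assms by (force simp: not_le[symmetric])
    show "a powr q \<le> (b powr (1 / q)) powr q" if "a \<le> b powr (1 / q)"
      using that powr_mono2[of q a "b powr (1 / q)"] assms by simp
  qed
  finally show ?thesis .
qed

lemma tendsto_of_approximate_bounds:
  fixes f :: "'a \<Rightarrow> real" and l u :: "real \<Rightarrow> real"
  assumes "(l \<longlongrightarrow> L) (at_right 0)" "(u \<longlongrightarrow> L) (at_right 0)"
    and bounds: "\<And>d e. 0 < d \<Longrightarrow> d < 1 \<Longrightarrow> 0 < e \<Longrightarrow>
      eventually (\<lambda>t. l d - e \<le> f t \<and> f t \<le> u d + e) F"
  shows "(f \<longlongrightarrow> L) F"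
proof (rule tendstoI)
  fix e :: real
  assume "0 < e"
  have "eventually (\<lambda>d. 0 < d \<and> d < 1 \<and> dist (l d) L < e / 2 \<and> dist (u d) L < e / 2) (at_right 0)"
    using \<open>0 < e\<close> assms(1,2)
    by (intro eventually_conj eventually_at_right_less tendstoD)
       (auto simp: eventually_at_right_field intro!: exI[of _ 1])
  then obtain d where "0 < d" "d < 1" "dist (l d) L < e / 2" "dist (u d) L < e / 2"
    using eventually_happens[of _ "at_right (0::real)"] by auto
  then have "L - e / 2 < l d" "u d < L + e / 2"
    using abs_less_iff[of "l d - L" "e / 2"] abs_less_iff[of "u d - L" "e / 2"]
    unfolding dist_real_def by linarith+
  with bounds[of d "e / 2"] \<open>0 < d\<close> \<open>d < 1\<close> \<open>0 < e\<close>
  show "eventually (\<lambda>t. dist (f t) L < e) F"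
    by (auto elim!: eventually_mono simp: dist_real_def abs_less_iff)
qed

lemma ennreal_tendsto_of_approximate_bounds:
  fixes f :: "'a \<Rightarrow> ennreal" and l u :: "real \<Rightarrow> real"
  assumes "(l \<longlongrightarrow> L) (at_right 0)" "(u \<longlongrightarrow> L) (at_right 0)"
    and bounds: "\<And>d e. 0 < d \<Longrightarrow> d < 1 \<Longrightarrow> 0 < e \<Longrightarrow>
      eventually (\<lambda>t. ennreal (l d) \<le> f t + ennreal e \<and> f t \<le> ennreal (u d) + ennreal e) F"
  shows "(f \<longlongrightarrow> ennreal L) F"
proof -
  have "f t < \<infinity>" if "f t \<le> ennreal (u (1/2)) + ennreal 1" for t
    using that by (rule le_less_trans) simp
  then have fin: "eventually (\<lambda>t. f t = ennreal (enn2real (f t))) F"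
    using bounds[of "1/2" 1] by (auto elim!: eventually_mono)
  have "((\<lambda>t. enn2real (f t)) \<longlongrightarrow> max 0 L) F"
  proof (rule tendsto_of_approximate_bounds)
    show "((\<lambda>d. max 0 (l d)) \<longlongrightarrow> max 0 L) (at_right 0)"
      "((\<lambda>d. max 0 (u d)) \<longlongrightarrow> max 0 L) (at_right 0)"
      using assms(1,2) by (auto intro: tendsto_max)
    fix d e :: real
    assume "0 < d" "d < 1" "0 < e"
    show "eventually (\<lambda>t. max 0 (l d) - e \<le> enn2real (f t) \<and> enn2real (f t) \<le> max 0 (u d) + e) F"
      using bounds[OF \<open>0 < d\<close> \<open>d < 1\<close> \<open>0 < e\<close>] fin
    proof eventually_elim
      case (elim t)
      have "ennreal (max 0 (u d)) = ennreal (u d)"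
        by (rule ennreal_max_0)
      with elim \<open>0 < e\<close> have "ennreal (l d) \<le> ennreal (enn2real (f t) + e)"
        "ennreal (enn2real (f t)) \<le> ennreal (max 0 (u d) + e)"
        by (simp_all add: ennreal_plus)
      then have "l d \<le> enn2real (f t) + e" "enn2real (f t) \<le> max 0 (u d) + e"
        using \<open>0 < e\<close> by (simp_all add: add_nonneg_pos flip: ennreal_plus)
      moreover have "0 \<le> enn2real (f t) + e"
        using \<open>0 < e\<close> by simp
      ultimately show ?case
        by (simp add: max.boundedI)
    qed
  qed
  then have "((\<lambda>t. ennreal (enn2real (f t))) \<longlongrightarrow> ennreal L) F"
    by (auto dest: tendsto_ennrealI simp: ennreal_max_0)
  then show ?thesis
    by (rule tendsto_cong[OF fin, THEN iffD2])
qed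

lemma emeasure_completion_eq_mod_null:
  assumes "S \<in> sets M" "W \<in> null_sets M" "A - W = S - W"
  shows "emeasure (completion M) A = emeasure M S"
proof -
  have W: "W \<in> sets M"
    using assms(2) by auto
  have A: "A = (S - W) \<union> (A \<inter> W)"
    using assms(3) by blast
  have "A \<in> sets (completion M)"
    using assms W by (subst A, intro sets_completionI[of _ "S - W" "A \<inter> W" W]) auto
  have "emeasure (completion M) A \<le> emeasure (completion M) (S \<union> W)"
    using A assms W by (intro emeasure_mono) auto
  also have "\<dots> = emeasure M S"
    using assms W by (simp add: emeasure_Un_null_set)
  finally have "emeasure (completion M) A \<le> emeasure M S" .
  moreover have "emeasure M S = emeasure (completion M) (S - W)"
    using assms W by (simp add: emeasure_Diff_null_set)
  moreover have "\<dots> \<le> emeasure (completion M) A"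
    using A \<open>A \<in> sets (completion M)\<close> by (intro emeasure_mono) auto
  ultimately show ?thesis
    by simp
qed

lemma emeasure_le_of_subset_Un3:
  assumes "A \<subseteq> B \<union> C \<union> D" "B \<in> sets M" "C \<in> sets M" "D \<in> sets M"
  shows "emeasure M A \<le> emeasure M B + emeasure M C + emeasure M D"
proof -
  have "emeasure M A \<le> emeasure M (B \<union> C \<union> D)"
    using assms by (intro emeasure_mono) auto
  also have "\<dots> \<le> emeasure M (B \<union> C) + emeasure M D"
    using assms by (intro emeasure_subadditive) auto
  also have "\<dots> \<le> emeasure M B + emeasure M C + emeasure M D"
    using assms by (intro add_right_mono emeasure_subadditive)
  finally show ?thesis .
qed

locale symmetric_convex_body =
  fixes K :: "'a::euclidean_space set"
  assumes compact: "compact K" and convex: "convex K"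
    and interior_nonempty: "interior K \<noteq> {}" and symmetric: "uminus ` K = K"
begin

abbreviation N where "N \<equiv> minkowski_functional K"

lemma uminus_mem: "k \<in> K \<Longrightarrow> - k \<in> K"
  using symmetric by force

lemma zero_in_interior: "0 \<in> interior K"
proof -
  obtain a e where "e > 0" and ball: "ball a e \<subseteq> K"
    using interior_nonempty by (auto simp: mem_interior)
  have "z \<in> K" if "z \<in> ball 0 e" for z
  proof -
    have "a + z \<in> K" "z - a \<in> K"
      using ball that uminus_mem[of "a - z"] by (auto simp: dist_norm subset_iff)
    then have "(1/2) *\<^sub>R (a + z) + (1/2) *\<^sub>R (z - a) \<in> K"
      using convex by (intro convexD) auto
    then show ?thesis
      by (simp add: scaleR_right_diff_distrib scaleR_right_distrib flip: scaleR_add_left)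
  qed
  with \<open>e > 0\<close> show ?thesis
    by (meson centre_in_ball interior_maximal open_ball subsetI subset_iff)
qed

lemma emeasure_finite: "emeasure lborel K < \<infinity>"
  using emeasure_bounded_finite[OF compact_imp_bounded[OF compact]] .

lemma zero_mem: "0 \<in> K"
  using zero_in_interior interior_subset by blast

lemma absorbing: "\<exists>t>0. z /\<^sub>R t \<in> K"
proof -
  obtain e where "e > 0" "ball 0 e \<subseteq> K"
    using zero_in_interior by (auto simp: mem_interior)
  define t where "t = norm z / e + 1"
  have "t > 0"
    using \<open>e > 0\<close> by (simp add: t_def add_nonneg_pos)
  have "norm z < e * t"
    using \<open>e > 0\<close> by (simp add: t_def distrib_left)
  then have "z /\<^sub>R t \<in> ball 0 e"
    using \<open>t > 0\<close> by (simp add: field_simps)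
  with \<open>ball 0 e \<subseteq> K\<close> \<open>t > 0\<close> show ?thesis
    by blast
qed

lemma divide_scaleR_mem_mono:
  assumes "z /\<^sub>R t \<in> K" "0 < t" "t \<le> s" shows "z /\<^sub>R s \<in> K"
proof -
  have "(t/s) *\<^sub>R (z /\<^sub>R t) + (1 - t/s) *\<^sub>R 0 \<in> K"
    using convex assms zero_mem by (intro convexD) auto
  moreover have "t / s * inverse t = inverse s"
    using assms by (simp add: field_simps)
  ultimately show ?thesis
    by (simp add: scaleR_scaleR)
qed

lemma minkowski_functional_zero: "N 0 = 0"
  unfolding minkowski_functional_def using zero_mem
  by (intro cInf_eq_minimum) (auto intro!: image_eqI[of 0 _ 0])

lemma minkowski_functional_eq_Inf:
  assumes "z \<noteq> 0" shows "N z = Inf {t. 0 < t \<and> z /\<^sub>R t \<in> K}"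
proof -
  have "z \<in> (\<lambda>s. t *\<^sub>R s) ` K \<longleftrightarrow> 0 < t \<and> z /\<^sub>R t \<in> K" if "0 \<le> t" for t
    using that assms by (cases "t = 0") (auto simp: image_iff intro: bexI[of _ "z /\<^sub>R t"])
  then have "{t. 0 \<le> t \<and> z \<in> (\<lambda>s. t *\<^sub>R s) ` K} = {t. 0 < t \<and> z /\<^sub>R t \<in> K}"
    by auto
  then show ?thesis
    unfolding minkowski_functional_def by simp
qed

lemma minkowski_functional_pos:
  assumes "z \<noteq> 0" shows "0 < N z"
proof -
  obtain B where "B > 0" and B: "\<And>k. k \<in> K \<Longrightarrow> norm k \<le> B"
    using compact_imp_bounded[OF compact] bounded_pos by blast
  have "norm z / B \<le> t" if "0 < t" "z /\<^sub>R t \<in> K" for t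
    using B[OF that(2)] that(1) \<open>B > 0\<close> by (simp add: field_simps)
  then have "norm z / B \<le> N z"
    unfolding minkowski_functional_eq_Inf[OF assms] using absorbing
    by (intro cInf_greatest) auto
  moreover have "0 < norm z / B"
    using assms \<open>B > 0\<close> by simp
  ultimately show ?thesis
    by linarith
qed

lemma minkowski_functional_nonneg: "0 \<le> N z"
  using minkowski_functional_pos[of z] minkowski_functional_zero by (cases "z = 0") auto

lemma minkowski_functional_le_iff:
  assumes "0 < r" shows "N z \<le> r \<longleftrightarrow> z /\<^sub>R r \<in> K"
proof (cases "z = 0")
  case True
  then show ?thesis
    using assms zero_mem minkowski_functional_zero by simp
next
  case False
  let ?T = "{t. 0 < t \<and> z /\<^sub>R t \<in> K}"
  have bdd: "bdd_below ?T"
    by (auto intro: bdd_belowI[of _ 0])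
  show ?thesis
  proof
    assume "z /\<^sub>R r \<in> K"
    then show "N z \<le> r"
      unfolding minkowski_functional_eq_Inf[OF False] using assms bdd by (intro cInf_lower) auto
  next
    assume "N z \<le> r"
    have "z /\<^sub>R s \<in> K" if "r < s" for s
    proof -
      have "Inf ?T < s"
        using \<open>N z \<le> r\<close> \<open>r < s\<close> minkowski_functional_eq_Inf[OF False] by simp
      moreover have "?T \<noteq> {}"
        using absorbing by auto
      ultimately obtain t where "t \<in> ?T" "t < s"
        using cInf_less_iff[OF _ bdd] by blast
      then show ?thesis
        using divide_scaleR_mem_mono by auto
    qed
    then have "eventually (\<lambda>s. z /\<^sub>R s \<in> K) (at_right r)"
      using gt_ex[of r] by (auto simp: eventually_at_right_field)
    moreover have "((\<lambda>s. z /\<^sub>R s) \<longlongrightarrow> z /\<^sub>R r) (at_right r)"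
      using assms by (intro tendsto_intros) auto
    ultimately show "z /\<^sub>R r \<in> K"
      using compact_imp_closed[OF compact] by (intro Lim_in_closed_set) auto
  qed
qed

lemma minkowski_functional_minus: "N (- z) = N z"
proof (cases "z = 0")
  case False
  have "- z /\<^sub>R t \<in> K \<longleftrightarrow> z /\<^sub>R t \<in> K" for t
    using uminus_mem[of "- z /\<^sub>R t"] uminus_mem[of "z /\<^sub>R t"] by auto
  then show ?thesis
    using False by (simp add: minkowski_functional_eq_Inf)
qed simp

lemma minkowski_functional_le_0_iff: "N z \<le> 0 \<longleftrightarrow> z = 0"
  using minkowski_functional_pos[of z] minkowski_functional_zero by (cases "z = 0") auto

lemma borel_measurable_minkowski_functional[measurable]: "N \<in> borel_measurable borel"
proof (subst borel_measurable_iff_le, intro allI)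
  fix r :: real
  show "{z \<in> space borel. N z \<le> r} \<in> sets borel"
  proof (cases "r > 0")
    case True
    then have "{z \<in> space borel. N z \<le> r} = (\<lambda>z. z /\<^sub>R r) -` K"
      using minkowski_functional_le_iff[OF True] by auto
    moreover have "closed ((\<lambda>z. z /\<^sub>R r) -` K)"
      by (intro closed_vimage compact_imp_closed compact continuous_intros)
    ultimately show ?thesis
      by simp
  next
    case False
    have "N z \<le> r \<longleftrightarrow> r = 0 \<and> z = 0" for z
      using False minkowski_functional_nonneg[of z] minkowski_functional_le_0_iff[of z] by auto
    then have "{z \<in> space borel. N z \<le> r} = (if r = 0 then {0} else {})"
      by auto
    then show ?thesis
      by simp
  qed
qed

lemma emeasure_minkowski_functional_le:
  assumes "0 \<le> r"
  shows "emeasure lborel {y. N (x - y) \<le> r} = ennreal (r ^ DIM('a)) * emeasure lborel K"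
proof (cases "r = 0")
  case True
  then have "{y. N (x - y) \<le> r} = {x}"
    using minkowski_functional_le_0_iff by auto
  then show ?thesis
    using True by (simp add: emeasure_lborel_countable)
next
  case False
  then have "r > 0"
    using assms by simp
  have "y = (- r) *\<^sub>R k + x \<longleftrightarrow> k = (x - y) /\<^sub>R r" for y k
  proof
    assume "y = (- r) *\<^sub>R k + x"
    then show "k = (x - y) /\<^sub>R r"
      using \<open>r > 0\<close> by simp
  next
    assume "k = (x - y) /\<^sub>R r"
    then show "y = (- r) *\<^sub>R k + x"
      using \<open>r > 0\<close> by simp
  qed
  then have "{y. N (x - y) \<le> r} = (\<lambda>k. (- r) *\<^sub>R k + x) ` K"
    using \<open>r > 0\<close> by (auto simp: minkowski_functional_le_iff image_iff)
  moreover have "K \<in> sets lborel" "{y. N (x - y) \<le> r} \<in> sets lborel"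
    using compact by (auto simp: compact_imp_closed)
  ultimately show ?thesis
    using emeasure_lebesgue_affine[of "- r" x K] \<open>r > 0\<close> by simp
qed

lemma emeasure_minkowski_functional_powr_le:
  assumes "0 < p" "0 \<le> b" "0 < c"
  shows "emeasure lborel {y. c * N (x - y) powr (DIM('a) / p) \<le> b}
           = ennreal ((b / c) powr p) * emeasure lborel K"
proof -
  let ?r = "(b / c) powr (p / DIM('a))"
  have "c * N (x - y) powr (DIM('a) / p) \<le> b \<longleftrightarrow> N (x - y) \<le> ?r" for y
    using assms powr_le_iff_le_powr_inverse[of "DIM('a) / p" "N (x - y)" "b / c"]
    by (simp add: minkowski_functional_nonneg field_simps)
  moreover have "?r ^ DIM('a) = ?r powr DIM('a)"
    by (simp add: powr_realpow')
  then have "?r ^ DIM('a) = (b / c) powr p"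
    by (simp add: powr_powr)
  ultimately show ?thesis
    using emeasure_minkowski_functional_le[of ?r x] by simp
qed

end

locale difference_quotient = symmetric_convex_body K for K :: "'a::euclidean_space set" +
  fixes p :: real and g :: "'a \<Rightarrow> real"
  assumes p_pos: "0 < p"
    and borel_measurable_g[measurable]: "g \<in> borel_measurable borel"
    and integrable_g: "integrable lborel (\<lambda>x. \<bar>g x\<bar> powr p)"
begin

abbreviation lborel2 :: "('a \<times> 'a) measure" where "lborel2 \<equiv> lborel \<Otimes>\<^sub>M lborel"

definition level_set :: "real \<Rightarrow> ('a \<times> 'a) set" where
  "level_set t = {(x, y). x \<noteq> y \<and> t \<le> \<bar>g x - g y\<bar> / N (x - y) powr (DIM('a) / p)}"

definition large_fst :: "real \<Rightarrow> 'a set \<Rightarrow> ('a \<times> 'a) set" where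
  "large_fst c P = {(x, y). x \<in> P \<and> c * N (x - y) powr (DIM('a) / p) \<le> \<bar>g x\<bar>}"

definition large_snd :: "real \<Rightarrow> 'a set \<Rightarrow> ('a \<times> 'a) set" where
  "large_snd c P = {(x, y). y \<in> P \<and> c * N (x - y) powr (DIM('a) / p) \<le> \<bar>g y\<bar>}"

definition energy :: "'a set \<Rightarrow> ennreal" where
  "energy P = (\<integral>\<^sup>+x\<in>P. ennreal (\<bar>g x\<bar> powr p) \<partial>lborel)"

lemma sets_Collect: "Measurable.pred lborel2 P \<Longrightarrow> Collect P \<in> sets lborel2"
  by (simp add: pred_def space_pair_measure)

lemma sets_level_set[measurable]: "level_set t \<in> sets lborel2"
  unfolding level_set_def case_prod_beta by (rule sets_Collect) measurable

lemma sets_large_fst[measurable]: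
  assumes [measurable]: "P \<in> sets borel" shows "large_fst c P \<in> sets lborel2"
  unfolding large_fst_def case_prod_beta by (rule sets_Collect) measurable

lemma sets_large_snd[measurable]:
  assumes [measurable]: "P \<in> sets borel" shows "large_snd c P \<in> sets lborel2"
  unfolding large_snd_def case_prod_beta by (rule sets_Collect) measurable

lemma sets_Id[measurable]: "Id \<in> sets lborel2"
proof -
  have "{z :: 'a \<times> 'a. fst z = snd z} \<in> sets lborel2"
    by (rule sets_Collect) measurable
  moreover have "Id = {z. fst z = snd z}"
    by auto
  ultimately show ?thesis
    by metis
qed

lemma emeasure_large_fst:
  assumes "0 < c" and [measurable]: "P \<in> sets borel"
  shows "emeasure lborel2 (large_fst c P) = ennreal (c powr - p) * emeasure lborel K * energy P"
proof -
  have fibre: "emeasure lborel (Pair x -` large_fst c P)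
      = ennreal (c powr - p) * emeasure lborel K * (ennreal (\<bar>g x\<bar> powr p) * indicator P x)" for x
  proof (cases "x \<in> P")
    case True
    then have "Pair x -` large_fst c P = {y. c * N (x - y) powr (DIM('a) / p) \<le> \<bar>g x\<bar>}"
      by (auto simp: large_fst_def)
    moreover have "(\<bar>g x\<bar> / c) powr p = c powr - p * \<bar>g x\<bar> powr p"
      using \<open>0 < c\<close> by (simp add: powr_divide powr_minus_divide)
    ultimately show ?thesis
      using True emeasure_minkowski_functional_powr_le[OF p_pos abs_ge_zero \<open>0 < c\<close>]
      by (simp add: ennreal_mult' mult_ac)
  qed (auto simp: large_fst_def)
  have "emeasure lborel2 (large_fst c P) = (\<integral>\<^sup>+x. emeasure lborel (Pair x -` large_fst c P) \<partial>lborel)"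
    by (rule lborel.emeasure_pair_measure_alt) measurable
  also have "\<dots> = (\<integral>\<^sup>+x. ennreal (c powr - p) * emeasure lborel K
                      * (ennreal (\<bar>g x\<bar> powr p) * indicator P x) \<partial>lborel)"
    by (simp only: fibre)
  also have "\<dots> = ennreal (c powr - p) * emeasure lborel K * energy P"
    unfolding energy_def by (rule nn_integral_cmult) measurable
  finally show ?thesis .
qed

lemma emeasure_large_snd:
  assumes [measurable]: "P \<in> sets borel"
  shows "emeasure lborel2 (large_snd c P) = emeasure lborel2 (large_fst c P)"
proof -
  have "N (y - x) = N (x - y)" for x y
    using minkowski_functional_minus[of "x - y"] by simp
  then have swap: "(\<lambda>(x, y). (y, x)) -` large_snd c P \<inter> space lborel2 = large_fst c P"
    by (auto simp: large_fst_def large_snd_def space_pair_measure)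
  have "emeasure lborel2 (large_snd c P) = emeasure (distr lborel2 lborel2 (\<lambda>(x, y). (y, x))) (large_snd c P)"
    by (simp flip: lborel_pair.distr_pair_swap)
  also have "\<dots> = emeasure lborel2 ((\<lambda>(x, y). (y, x)) -` large_snd c P \<inter> space lborel2)"
    using sets_large_snd[OF assms] by (intro emeasure_distr) (auto simp: measurable_pair_swap')
  also have "\<dots> = emeasure lborel2 (large_fst c P)"
    by (simp only: swap)
  finally show ?thesis .
qed

lemma scaled_emeasure_large:
  assumes "0 < a" "0 < t" "P \<in> sets borel"
  shows "ennreal (t powr p) * emeasure lborel2 (large_fst (a * t) P)
           = ennreal (a powr - p) * emeasure lborel K * energy P"
    and "ennreal (t powr p) * emeasure lborel2 (large_snd (a * t) P)
           = ennreal (a powr - p) * emeasure lborel K * energy P"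
proof -
  have "t powr p * (a * t) powr - p = a powr - p"
    using assms by (simp add: powr_mult powr_minus field_simps)
  then have "ennreal (t powr p) * ennreal ((a * t) powr - p) = ennreal (a powr - p)"
    by (simp flip: ennreal_mult)
  then show "ennreal (t powr p) * emeasure lborel2 (large_fst (a * t) P)
           = ennreal (a powr - p) * emeasure lborel K * energy P"
    using assms by (simp add: emeasure_large_fst mult.assoc flip: mult.assoc[of "ennreal (t powr p)"])
  then show "ennreal (t powr p) * emeasure lborel2 (large_snd (a * t) P)
           = ennreal (a powr - p) * emeasure lborel K * energy P"
    using assms by (simp add: emeasure_large_snd)
qed

lemma energy_finite: "energy P < \<infinity>"
proof -
  have "energy P \<le> (\<integral>\<^sup>+x. ennreal (\<bar>g x\<bar> powr p) \<partial>lborel)"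
    unfolding energy_def by (intro nn_integral_mono) (simp add: indicator_def)
  also have "\<dots> < \<infinity>"
    using integrable_g by (simp add: integrable_iff_bounded)
  finally show ?thesis .
qed

lemma large_fst_antimono: "c \<le> c' \<Longrightarrow> large_fst c' P \<subseteq> large_fst c P"
  unfolding large_fst_def by (auto intro: order_trans[OF mult_right_mono])

lemma large_snd_antimono: "c \<le> c' \<Longrightarrow> large_snd c' P \<subseteq> large_snd c P"
  unfolding large_snd_def by (auto intro: order_trans[OF mult_right_mono])

lemma mem_level_set_iff:
  "(x, y) \<in> level_set t \<longleftrightarrow> x \<noteq> y \<and> t * N (x - y) powr (DIM('a) / p) \<le> \<bar>g x - g y\<bar>"
  using minkowski_functional_pos[of "x - y"] by (auto simp: level_set_def le_divide_eq)

lemma level_set_subset: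
  "level_set t \<subseteq> large_fst ((1 - d) * t) UNIV \<union> large_snd ((1 - d) * t) UNIV
                   \<union> (large_fst (d * t) UNIV \<inter> large_snd (d * t) UNIV)"
proof safe
  fix x y
  let ?n = "N (x - y) powr (DIM('a) / p)"
  assume "(x, y) \<in> level_set t" "(x, y) \<notin> large_fst ((1 - d) * t) UNIV"
    "(x, y) \<notin> large_snd ((1 - d) * t) UNIV"
  moreover have "\<bar>g x - g y\<bar> \<le> \<bar>g x\<bar> + \<bar>g y\<bar>"
    by (rule abs_triangle_ineq4)
  moreover have "(1 - d) * t * ?n = t * ?n - d * t * ?n"
    by (simp add: algebra_simps)
  ultimately show "(x, y) \<in> large_fst (d * t) UNIV" "(x, y) \<in> large_snd (d * t) UNIV"
    by (auto simp: mem_level_set_iff large_fst_def large_snd_def)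
qed

lemma large_subset_level_set:
  assumes "0 \<le> t" "0 \<le> d"
  shows "large_fst ((1 + d) * t) UNIV \<union> large_snd ((1 + d) * t) UNIV
           \<subseteq> level_set t \<union> (large_fst (d * t) UNIV \<inter> large_snd (d * t) UNIV) \<union> Id"
proof
  fix z
  assume z: "z \<in> large_fst ((1 + d) * t) UNIV \<union> large_snd ((1 + d) * t) UNIV"
  obtain x y where [simp]: "z = (x, y)"
    by fastforce
  let ?n = "N (x - y) powr (DIM('a) / p)"
  show "z \<in> level_set t \<union> (large_fst (d * t) UNIV \<inter> large_snd (d * t) UNIV) \<union> Id"
  proof (cases "(x, y) \<in> level_set t \<or> x = y")
    case False
    then have "\<bar>g x - g y\<bar> < t * ?n"
      by (auto simp: mem_level_set_iff)
    moreover have "\<bar>g x\<bar> - \<bar>g y\<bar> \<le> \<bar>g x - g y\<bar>" "\<bar>g y\<bar> - \<bar>g x\<bar> \<le> \<bar>g x - g y\<bar>"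
      by (rule abs_triangle_ineq2, metis abs_minus_commute abs_triangle_ineq2)
    moreover have "(1 + d) * t * ?n = t * ?n + d * t * ?n" "0 \<le> t * ?n"
      using assms by (simp_all add: algebra_simps)
    ultimately show ?thesis
      using z by (auto simp: large_fst_def large_snd_def)
  qed auto
qed

lemma large_fst_Int_large_snd_subset:
  "large_fst c UNIV \<inter> large_snd c UNIV \<subseteq> large_fst c P \<union> large_snd c P \<union> (- P) \<times> (- P)"
  by (auto simp: large_fst_def large_snd_def)

lemma emeasure_Id: "emeasure lborel2 Id = 0"
proof -
  have "emeasure lborel2 Id = (\<integral>\<^sup>+x. emeasure lborel (Pair (x :: 'a) -` Id) \<partial>lborel)"
    using sets_Id by (rule lborel.emeasure_pair_measure_alt)
  moreover have "Pair x -` Id = {x}" for x :: 'a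
    by auto
  ultimately show ?thesis
    by (simp add: emeasure_lborel_countable)
qed

definition level_measure :: "real \<Rightarrow> ennreal" where
  "level_measure t = ennreal (t powr p) * emeasure lborel2 (level_set t)"

lemma level_measure_le:
  assumes "0 < t"
  shows "level_measure t \<le> ennreal (2 powr (p + 1)) * emeasure lborel K * energy UNIV"
proof -
  have "level_set t \<subseteq> large_fst ((1/2) * t) UNIV \<union> large_snd ((1/2) * t) UNIV"
    using level_set_subset[of t "1/2"] by auto
  then have "emeasure lborel2 (level_set t)
      \<le> emeasure lborel2 (large_fst ((1/2) * t) UNIV \<union> large_snd ((1/2) * t) UNIV)"
    by (rule emeasure_mono) measurable
  also have "\<dots> \<le> emeasure lborel2 (large_fst ((1/2) * t) UNIV) + emeasure lborel2 (large_snd ((1/2) * t) UNIV)"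
    by (rule emeasure_subadditive) measurable
  finally have "emeasure lborel2 (level_set t)
      \<le> emeasure lborel2 (large_fst ((1/2) * t) UNIV) + emeasure lborel2 (large_snd ((1/2) * t) UNIV)" .
  then have "level_measure t \<le> ennreal (t powr p) * emeasure lborel2 (large_fst ((1/2) * t) UNIV)
      + ennreal (t powr p) * emeasure lborel2 (large_snd ((1/2) * t) UNIV)"
    unfolding level_measure_def by (simp add: mult_left_mono flip: distrib_left)
  also have "\<dots> = 2 * (ennreal ((1/2) powr - p) * emeasure lborel K * energy UNIV)"
    using scaled_emeasure_large[of "1/2" t UNIV] assms by (simp add: mult_2)
  finally have "level_measure t \<le> 2 * (ennreal ((1/2) powr - p) * emeasure lborel K * energy UNIV)" .
  moreover have "2 * ennreal ((1/2) powr - p) = ennreal (2 powr (p + 1))"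
    by (simp add: powr_add powr_minus_divide powr_divide ennreal_mult mult.commute)
  ultimately show ?thesis
    by (metis mult.assoc)
qed

lemma level_measure_le_large_pair:
  assumes "0 < t" "0 < d" "d < 1"
  shows "level_measure t \<le> 2 * ennreal ((1 - d) powr - p) * emeasure lborel K * energy UNIV
                           + ennreal (t powr p) * emeasure lborel2 (large_fst (d * t) UNIV \<inter> large_snd (d * t) UNIV)"
proof -
  have "emeasure lborel2 (level_set t) \<le> emeasure lborel2 (large_fst ((1 - d) * t) UNIV)
      + emeasure lborel2 (large_snd ((1 - d) * t) UNIV)
      + emeasure lborel2 (large_fst (d * t) UNIV \<inter> large_snd (d * t) UNIV)"
    by (rule emeasure_le_of_subset_Un3[OF level_set_subset]) measurable
  then have "level_measure t \<le> ennreal (t powr p) * emeasure lborel2 (large_fst ((1 - d) * t) UNIV)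
      + ennreal (t powr p) * emeasure lborel2 (large_snd ((1 - d) * t) UNIV)
      + ennreal (t powr p) * emeasure lborel2 (large_fst (d * t) UNIV \<inter> large_snd (d * t) UNIV)"
    unfolding level_measure_def by (auto simp flip: distrib_left intro!: mult_left_mono)
  then show ?thesis
    using assms by (simp add: scaled_emeasure_large mult.assoc flip: mult_2)
qed

lemma large_pair_le_level_measure:
  assumes "0 < t" "0 < d"
  shows "2 * ennreal ((1 + d) powr - p) * emeasure lborel K * energy UNIV
           \<le> level_measure t + 2 * (ennreal (t powr p)
                 * emeasure lborel2 (large_fst (d * t) UNIV \<inter> large_snd (d * t) UNIV))"
proof -
  let ?A = "large_fst ((1 + d) * t) UNIV" and ?B = "large_snd ((1 + d) * t) UNIV"
    and ?D = "large_fst (d * t) UNIV \<inter> large_snd (d * t) UNIV"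
  have "emeasure lborel2 ?A + emeasure lborel2 ?B = emeasure lborel2 (?A \<union> ?B) + emeasure lborel2 (?A \<inter> ?B)"
    by (intro emeasure_Un_Int) measurable
  also have "emeasure lborel2 (?A \<union> ?B) \<le> emeasure lborel2 (level_set t) + emeasure lborel2 ?D + emeasure lborel2 Id"
    using assms by (intro emeasure_le_of_subset_Un3[OF large_subset_level_set]) measurable
  also have "\<dots> = emeasure lborel2 (level_set t) + emeasure lborel2 ?D"
    by (simp add: emeasure_Id)
  also have "?A \<inter> ?B \<subseteq> ?D"
    using assms large_fst_antimono[of "d * t" "(1 + d) * t"] large_snd_antimono[of "d * t" "(1 + d) * t"]
    by (auto simp: algebra_simps)
  then have "emeasure lborel2 (?A \<inter> ?B) \<le> emeasure lborel2 ?D"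
    by (rule emeasure_mono) measurable
  finally have "emeasure lborel2 ?A + emeasure lborel2 ?B
      \<le> emeasure lborel2 (level_set t) + emeasure lborel2 ?D + emeasure lborel2 ?D"
    by (simp add: add.assoc add_mono)
  then have "ennreal (t powr p) * (emeasure lborel2 ?A + emeasure lborel2 ?B)
      \<le> ennreal (t powr p) * (emeasure lborel2 (level_set t) + emeasure lborel2 ?D + emeasure lborel2 ?D)"
    by (rule mult_left_mono) simp
  then show ?thesis
    using assms
    by (simp add: level_measure_def scaled_emeasure_large distrib_left mult.assoc mult.left_commute add.assoc
        flip: mult_2)
qed

lemma scaled_emeasure_large_pair_le:
  assumes "0 < t" "0 < d" and [measurable]: "P \<in> sets borel"
  shows "ennreal (t powr p) * emeasure lborel2 (large_fst (d * t) UNIV \<inter> large_snd (d * t) UNIV)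
           \<le> 2 * (ennreal (d powr - p) * emeasure lborel K * energy P)
             + ennreal (t powr p) * (emeasure lborel (- P) * emeasure lborel (- P))"
proof -
  have "emeasure lborel2 (large_fst (d * t) UNIV \<inter> large_snd (d * t) UNIV)
      \<le> emeasure lborel2 (large_fst (d * t) P) + emeasure lborel2 (large_snd (d * t) P)
        + emeasure lborel2 ((- P) \<times> (- P))"
    by (rule emeasure_le_of_subset_Un3[OF large_fst_Int_large_snd_subset]) measurable
  also have "emeasure lborel2 ((- P) \<times> (- P)) = emeasure lborel (- P) * emeasure lborel (- P)"
    by (intro lborel.emeasure_pair_measure_Times) auto
  finally show ?thesis
    using assms
    by (auto simp: scaled_emeasure_large distrib_left mult_2 simp flip: add.assoc
        intro: order_trans[OF mult_left_mono])
qed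

lemma energy_small_values_tendsto: "(\<lambda>i. energy {x. \<bar>g x\<bar> powr p < inverse (Suc i)}) \<longlonglongrightarrow> 0"
proof -
  let ?u = "\<lambda>i x. ennreal (\<bar>g x\<bar> powr p) * indicator {x. \<bar>g x\<bar> powr p < inverse (Suc i)} x"
  have lim: "(\<lambda>i. ?u i x) \<longlonglongrightarrow> 0" for x
  proof (cases "\<bar>g x\<bar> powr p = 0")
    case False
    then obtain i0 where i0: "inverse (Suc i0) < \<bar>g x\<bar> powr p"
      using reals_Archimedean[of "\<bar>g x\<bar> powr p"] by auto
    have "?u i x = 0" if "i0 \<le> i" for i
    proof -
      have "inverse (Suc i) \<le> inverse (real (Suc i0))"
        using that by (intro le_imp_inverse_le) auto
      then have "\<not> \<bar>g x\<bar> powr p < inverse (Suc i)"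
        using i0 by linarith
      then show ?thesis
        by (simp add: indicator_def)
    qed
    then show ?thesis
      by (intro tendsto_eventually eventually_sequentiallyI)
  qed simp
  have "(\<lambda>i. \<integral>\<^sup>+x. ?u i x \<partial>lborel) \<longlonglongrightarrow> (\<integral>\<^sup>+x. 0 \<partial>(lborel :: 'a measure))"
  proof (rule nn_integral_dominated_convergence[where w = "\<lambda>x. ennreal (\<bar>g x\<bar> powr p)"])
    show "(\<integral>\<^sup>+x. ennreal (\<bar>g x\<bar> powr p) \<partial>lborel) < \<infinity>"
      using energy_finite[of UNIV] by (simp add: energy_def)
    show "AE x in lborel. (\<lambda>i. ?u i x) \<longlonglongrightarrow> 0"
      using lim by simp
    show "AE x in lborel. ?u i x \<le> ennreal (\<bar>g x\<bar> powr p)" for i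
      by (simp add: indicator_def)
  qed measurable
  then show ?thesis
    by (simp add: energy_def)
qed

lemma emeasure_large_values_finite:
  assumes "0 < s" shows "emeasure lborel {x. s \<le> \<bar>g x\<bar> powr p} < \<infinity>"
proof -
  have "emeasure lborel {x \<in> space lborel. s \<le> \<bar>g x\<bar> powr p}
      \<le> ennreal (1 / s * (\<integral>x. \<bar>g x\<bar> powr p \<partial>lborel))"
    using integrable_g assms by (intro integral_Markov_inequality) auto
  also have "\<dots> < \<infinity>"
    by simp
  finally show ?thesis
    by simp
qed

lemma eventually_scaled_large_pair_small:
  assumes "0 < d" "0 < e"
  shows "eventually (\<lambda>t. 2 * (ennreal (t powr p)
           * emeasure lborel2 (large_fst (d * t) UNIV \<inter> large_snd (d * t) UNIV)) \<le> ennreal e) (at_right 0)"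
proof -
  let ?P = "\<lambda>i::nat. {x. \<bar>g x\<bar> powr p < inverse (Suc i)}"
  let ?c = "4 * (ennreal (d powr - p) * emeasure lborel K)"
  have "(\<lambda>i. ?c * energy (?P i)) \<longlonglongrightarrow> ?c * 0"
    using emeasure_finite by (intro ennreal_tendsto_cmult energy_small_values_tendsto) (simp add: ennreal_mult_less_top)
  then have "eventually (\<lambda>i. ?c * energy (?P i) < ennreal (e / 2)) sequentially"
    using assms(2) by (intro order_tendstoD(2)) auto
  then obtain i where i: "?c * energy (?P i) < ennreal (e / 2)"
    by (auto simp: eventually_sequentially)
  define C where "C = emeasure lborel (- ?P i) * emeasure lborel (- ?P i)"
  have "- ?P i = {x. inverse (Suc i) \<le> \<bar>g x\<bar> powr p}"
    by auto
  then have "C < \<infinity>"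
    unfolding C_def using emeasure_large_values_finite[of "inverse (Suc i)"]
    by (simp add: ennreal_mult_less_top)
  have "((\<lambda>t. t powr p) \<longlongrightarrow> 0) (at_right 0)"
    using p_pos eventually_at_right_less[of 0]
    by (intro tendsto_zero_powrI tendsto_ident_at tendsto_const) (auto elim: eventually_mono)
  then have "((\<lambda>t. 2 * C * ennreal (t powr p)) \<longlongrightarrow> 2 * C * ennreal 0) (at_right 0)"
    using \<open>C < \<infinity>\<close> by (intro ennreal_tendsto_cmult tendsto_ennrealI) (auto simp: ennreal_mult_less_top)
  then have "eventually (\<lambda>t. 2 * C * ennreal (t powr p) < ennreal (e / 2)) (at_right 0)"
    using assms(2) by (intro order_tendstoD(2)) auto
  then show ?thesis
    using eventually_at_right_less
  proof eventually_elim
    case (elim t)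
    then have "2 * (ennreal (t powr p) * emeasure lborel2 (large_fst (d * t) UNIV \<inter> large_snd (d * t) UNIV))
        \<le> ?c * energy (?P i) + 2 * (ennreal (t powr p) * C)"
      using scaled_emeasure_large_pair_le[of t d "?P i"] assms
      by (auto simp: C_def distrib_left mult.assoc intro: order_trans[OF mult_left_mono])
    also have "\<dots> \<le> ennreal (e / 2) + ennreal (e / 2)"
      using i elim by (intro add_mono) (auto simp: mult_ac)
    finally show ?case
      using assms by (simp flip: ennreal_plus)
  qed
qed

lemma eventually_level_measure_bounds:
  assumes "0 < d" "d < 1" "0 < e"
  shows "eventually (\<lambda>t. 2 * ennreal ((1 + d) powr - p) * emeasure lborel K * energy UNIV
                          \<le> level_measure t + ennreal e
                        \<and> level_measure t
                          \<le> 2 * ennreal ((1 - d) powr - p) * emeasure lborel K * energy UNIV + ennreal e)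
           (at_right 0)"
  using eventually_scaled_large_pair_small[OF assms(1,3)] eventually_at_right_less
proof eventually_elim
  case (elim t)
  let ?D = "ennreal (t powr p) * emeasure lborel2 (large_fst (d * t) UNIV \<inter> large_snd (d * t) UNIV)"
  have "?D \<le> 2 * ?D"
    by (simp add: mult_2)
  then show ?case
    using elim level_measure_le_large_pair[of t d] large_pair_le_level_measure[of t d] assms
    by (auto intro: order_trans add_left_mono)
qed

lemma tendsto_level_measure: "(level_measure \<longlongrightarrow> 2 * emeasure lborel K * energy UNIV) (at_right 0)"
proof -
  obtain k where k: "emeasure lborel K = ennreal k" "0 \<le> k"
    using emeasure_finite by (cases "emeasure lborel K" rule: ennreal_cases) auto
  obtain F where F: "energy UNIV = ennreal F" "0 \<le> F"
    using energy_finite[of UNIV] by (cases "energy UNIV" rule: ennreal_cases) auto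
  have const: "2 * ennreal c * emeasure lborel K * energy UNIV = ennreal (2 * c * k * F)" if "0 \<le> c" for c
    using k F that by (simp add: ennreal_mult)
  have "(level_measure \<longlongrightarrow> ennreal (2 * k * F)) (at_right 0)"
  proof (rule ennreal_tendsto_of_approximate_bounds)
    show "((\<lambda>d. 2 * (1 + d) powr - p * k * F) \<longlongrightarrow> 2 * k * F) (at_right 0)"
      "((\<lambda>d. 2 * (1 - d) powr - p * k * F) \<longlongrightarrow> 2 * k * F) (at_right 0)"
      by (auto intro!: tendsto_eq_intros)
  qed (use eventually_level_measure_bounds const in auto)
  then show ?thesis
    using const[of 1] by simp
qed

lemma weak_Lp_bounds:
  "2 * emeasure lborel K * energy UNIV \<le> (SUP t\<in>{0<..}. level_measure t)"
  "(SUP t\<in>{0<..}. level_measure t) \<le> ennreal (2 powr (p + 1)) * emeasure lborel K * energy UNIV"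
proof -
  have "eventually (\<lambda>t. level_measure t \<le> (SUP t\<in>{0<..}. level_measure t)) (at_right 0)"
    using eventually_at_right_less[of "0 :: real"] by (rule eventually_mono) (auto intro: SUP_upper)
  then show "2 * emeasure lborel K * energy UNIV \<le> (SUP t\<in>{0<..}. level_measure t)"
    by (intro tendsto_upperbound[OF tendsto_level_measure]) auto
  show "(SUP t\<in>{0<..}. level_measure t) \<le> ennreal (2 powr (p + 1)) * emeasure lborel K * energy UNIV"
    using level_measure_le by (intro SUP_least) auto
qed

lemma emeasure_lebesgue_level_set:
  assumes "AE x in lborel. f x = g x"
  shows "emeasure lebesgue {(x, y). x \<noteq> y \<and> t \<le> \<bar>f x - f y\<bar> / N (x - y) powr (DIM('a) / p)}
           = emeasure lborel2 (level_set t)"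
proof -
  obtain Z where Z: "{x \<in> space lborel. f x \<noteq> g x} \<subseteq> Z" "emeasure lborel Z = 0" "Z \<in> sets lborel"
    using assms by (rule AE_E)
  let ?W = "Z \<times> UNIV \<union> UNIV \<times> Z"
  have "?W \<in> null_sets lborel2"
    using Z by (intro null_sets.Un lborel.times_in_null_sets1 lborel.times_in_null_sets2 null_setsI) auto
  moreover have "f x = g x" if "x \<notin> Z" for x
    using Z(1) that by auto
  then have "{(x, y). x \<noteq> y \<and> t \<le> \<bar>f x - f y\<bar> / N (x - y) powr (DIM('a) / p)} - ?W
      = level_set t - ?W"
    by (auto simp: level_set_def)
  moreover have "(lebesgue :: ('a \<times> 'a) measure) = completion lborel2"
    by (simp add: lborel_prod)
  ultimately show ?thesis
    using emeasure_completion_eq_mod_null[OF sets_level_set] by simp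
qed

lemma weak_Lp_pow_eq_SUP_level_measure:
  assumes "AE x in lborel. f x = g x"
  shows "weak_Lp_pow lebesgue p (\<lambda>(x, y). if x = y then 0 else (f x - f y) / N (x - y) powr (DIM('a) / p))
           = (SUP t\<in>{0<..}. level_measure t)"
proof -
  have "{z \<in> space lebesgue.
          t \<le> \<bar>case z of (x, y) \<Rightarrow> if x = y then 0 else (f x - f y) / N (x - y) powr (DIM('a) / p)\<bar>}
      = {(x, y). x \<noteq> y \<and> t \<le> \<bar>f x - f y\<bar> / N (x - y) powr (DIM('a) / p)}" if "0 < t" for t
    using that by (auto simp: abs_divide split: if_splits)
  then show ?thesis
    unfolding weak_Lp_pow_def level_measure_def
    by (intro SUP_cong) (simp_all add: emeasure_lebesgue_level_set[OF assms])
qed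

end

lemma borel_representative_powr_integrable:
  fixes f :: "'a::euclidean_space \<Rightarrow> real"
  assumes "f \<in> borel_measurable lebesgue" "integrable lebesgue (\<lambda>x. \<bar>f x\<bar> powr p)"
  obtains g where "g \<in> borel_measurable borel" "AE x in lborel. f x = g x"
    "integrable lborel (\<lambda>x. \<bar>g x\<bar> powr p)"
proof -
  obtain g where g[measurable]: "g \<in> borel_measurable lborel" and ae: "AE x in lborel. f x = g x"
    using completion_ex_borel_measurable_real[OF assms(1)] by auto
  have "integrable lebesgue (\<lambda>x. \<bar>g x\<bar> powr p)"
  proof (rule integrable_cong_AE_imp[OF assms(2)])
    show "(\<lambda>x. \<bar>g x\<bar> powr p) \<in> borel_measurable lebesgue"
      by (intro measurable_completion) measurable
    show "AE x in lebesgue. \<bar>f x\<bar> powr p = \<bar>g x\<bar> powr p"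
      using AE_completion[OF ae] by auto
  qed
  then have "integrable lborel (\<lambda>x. \<bar>g x\<bar> powr p)"
    by (subst integrable_completion[symmetric]) auto
  with g ae show ?thesis
    by (intro that[of g]) simp_all
qed

theorem theorem1p1:
  fixes K :: "'a::euclidean_space set" and p :: real and f :: "'a \<Rightarrow> real"
  assumes "1 \<le> p"
    and "compact K" and "convex K" and "interior K \<noteq> {}" and "uminus ` K = K"
    and "f \<in> borel_measurable lebesgue"
    and "integrable lebesgue (\<lambda>x. \<bar>f x\<bar> powr p)"
  shows "2 * emeasure lebesgue K * (\<integral>\<^sup>+ x. ennreal (\<bar>f x\<bar> powr p) \<partial>lebesgue)
           \<le> weak_Lp_pow (lebesgue :: ('a \<times> 'a) measure) p
                (\<lambda>(x, y). if x = y then 0 else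
                   (f x - f y) / (minkowski_functional K (x - y)) powr (real DIM('a) / p))
       \<and> weak_Lp_pow (lebesgue :: ('a \<times> 'a) measure) p
                (\<lambda>(x, y). if x = y then 0 else
                   (f x - f y) / (minkowski_functional K (x - y)) powr (real DIM('a) / p))
           \<le> 2 powr (p + 1) * emeasure lebesgue K * (\<integral>\<^sup>+ x. ennreal (\<bar>f x\<bar> powr p) \<partial>lebesgue)
       \<and> ((\<lambda>t. ennreal (t powr p) * emeasure (lebesgue :: ('a \<times> 'a) measure)
              {(x, y). x \<noteq> y \<and> \<bar>f x - f y\<bar> / (minkowski_functional K (x - y)) powr (real DIM('a) / p) \<ge> t})
           \<longlongrightarrow> 2 * emeasure lebesgue K * (\<integral>\<^sup>+ x. ennreal (\<bar>f x\<bar> powr p) \<partial>lebesgue)) (at_right 0)"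
proof -
  obtain g where g: "g \<in> borel_measurable borel" "AE x in lborel. f x = g x"
    "integrable lborel (\<lambda>x. \<bar>g x\<bar> powr p)"
    using borel_representative_powr_integrable[OF assms(6,7)] .
  interpret difference_quotient K p g
    using assms g by unfold_locales auto
  have "(\<integral>\<^sup>+ x. ennreal (\<bar>f x\<bar> powr p) \<partial>lebesgue) = energy UNIV"
    using g(2) by (auto simp: energy_def nn_integral_completion intro!: nn_integral_cong_AE)
  moreover have "emeasure lebesgue K = emeasure lborel K"
    using compact_imp_closed[OF assms(2)] by simp
  ultimately show ?thesis
    using weak_Lp_bounds tendsto_level_measure
    unfolding weak_Lp_pow_eq_SUP_level_measure[OF g(2)] level_measure_def
      emeasure_lebesgue_level_set[OF g(2)]
    by simp
qed

end
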